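(* Let $M$ be a von Neumann algebra acting on a separable Hilbert space $\mathcal H$, $\Omega\in\mathcal H$ a separating vector for $M$, and $T,S\in\mathcal B(\mathcal H)$ injective operators such that the maps $x\mapsto Tx\Omega$ and $x\mapsto Sx\Omega$ from $M$ to $\mathcal H$ are compact. Let $L_1(x):=\|Tx\Omega\|$ and $L_2(x):=\|Sx\Omega\|$ (dual-Lip-norms on $M$). Then $J(x,y):=\|Tx\Omega+Sy\Omega\|$, $(x,y)\in M\oplus M$, belongs to $\mathcal L((M,L_1),(M,L_2))$, and $$\mathrm{dist}_{qGH^*}((M,L_1),(M,L_2))\le\sup_{x\in M,\ \|x\|=1}\|(T-S)x\Omega\|.$$
   Context: A dual-Lip-norm on a von Neumann algebra $M$ is a norm on $M$ (everywhere finite) inducing the $w^*$-topology on bounded subsets of $M$; a Lip-von Neumann algebra (LvNA) is a pair $(M,L_M)$ with $L_M$ such a norm. A linear map is compact if it maps the unit ball to a relatively norm-compact set. $L_M$ is extended to $\mathcal M_2(M)$ ($2\times2$ matrices over $M$) by $L_M((a_{ij}))=\max_{i,j}L_M(a_{ij})$. For LvNAs $(M,L_M)$, $(N,L_N)$, $\mathcal L((M,L_M),(N,L_N))$ is the set of seminorms $L$ on $M\oplus N$ with $L(x,0)=L_M(x)$ and $L(0,y)=L_N(y)$ for all $x\in M,y\in N$; each such $L$ is extended to $\mathcal M_2(M)\oplus\mathcal M_2(N)\cong\mathcal M_2(M\oplus N)$ by entrywise maximum. $X_M=\{x\in\mathcal M_2(M): x\ge 0,\ \|x\|\le 1\}$,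 and similarly $X_N$. For such $L$, $\mathrm{dist}^L_H(X_M,X_N)=\max\big(\sup_{x\in X_M}\inf_{y\in X_N}L(x,-y),\ \sup_{y\in X_N}\inf_{x\in X_M}L(x,-y)\big)$, and $\mathrm{dist}_{qGH^*}((M,L_M),(N,L_N))=\inf_{L}\mathrm{dist}^L_H(X_M,X_N)$, the infimum over $L\in\mathcal L((M,L_M),(N,L_N))$. *)

theory Defs
  imports "HOL-Analysis.Analysis"
begin

text \<open>A complex Hilbert space is modelled as a real Hilbert space (type class
  real_inner + complete_space) together with a complex structure ci
  (multiplication by the imaginary unit), which is real-linear, squares to -1 and
  is orthogonal.  The complex inner product is then
  <u,v>_C = inner u v + i * inner u (ci v); its real part is the real inner product.\<close>

definition complex_structure :: "('h::real_inner \<Rightarrow> 'h) \<Rightarrow> bool" where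
  "complex_structure ci \<longleftrightarrow> linear ci \<and> (\<forall>v. ci (ci v) = - v)
     \<and> (\<forall>u v. inner (ci u) (ci v) = inner u v)"

definition separable_space_set :: "'h::metric_space set \<Rightarrow> bool" where
  "separable_space_set H \<longleftrightarrow> (\<exists>D. countable D \<and> D \<subseteq> H \<and> H \<subseteq> closure D)"

definition fadd :: "('h \<Rightarrow> 'h::real_vector) \<Rightarrow> ('h \<Rightarrow> 'h) \<Rightarrow> 'h \<Rightarrow> 'h" where
  "fadd x y = (\<lambda>v. x v + y v)"
definition fneg :: "('h \<Rightarrow> 'h::real_vector) \<Rightarrow> 'h \<Rightarrow> 'h" where
  "fneg x = (\<lambda>v. - x v)"
definition fzero :: "'h \<Rightarrow> 'h::real_vector" where
  "fzero = (\<lambda>v. 0)"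

definition cscale :: "('h \<Rightarrow> 'h::real_vector) \<Rightarrow> complex \<Rightarrow> ('h \<Rightarrow> 'h) \<Rightarrow> 'h \<Rightarrow> 'h" where
  "cscale ci c x = (\<lambda>v. Re c *\<^sub>R x v + Im c *\<^sub>R ci (x v))"

text \<open>Bounded (complex-)linear operators on H: bounded real-linear maps commuting with ci.\<close>
definition bop :: "('h \<Rightarrow> 'h) \<Rightarrow> ('h::real_normed_vector \<Rightarrow> 'h) \<Rightarrow> bool" where
  "bop ci x \<longleftrightarrow> bounded_linear x \<and> (\<forall>v. x (ci v) = ci (x v))"

definition commutant :: "('h \<Rightarrow> 'h) \<Rightarrow> ('h::real_normed_vector \<Rightarrow> 'h) set \<Rightarrow> ('h \<Rightarrow> 'h) set" where
  "commutant ci A = {y. bop ci y \<and> (\<forall>x\<in>A. y \<circ> x = x \<circ> y)}"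

definition is_adjoint :: "('h::real_inner \<Rightarrow> 'h) \<Rightarrow> ('h \<Rightarrow> 'h) \<Rightarrow> bool" where
  "is_adjoint y x \<longleftrightarrow> (\<forall>u v. inner (y u) v = inner u (x v))"

text \<open>von Neumann algebra: self-adjoint set of bounded operators equal to its bicommutant
  (equivalently, a unital WOT-closed *-subalgebra of B(H), by the bicommutant theorem).\<close>
definition von_neumann_algebra :: "('h \<Rightarrow> 'h) \<Rightarrow> ('h::real_inner \<Rightarrow> 'h) set \<Rightarrow> bool" where
  "von_neumann_algebra ci M \<longleftrightarrow> (\<forall>x\<in>M. bop ci x) \<and> (\<forall>x\<in>M. \<exists>y\<in>M. is_adjoint y x)
     \<and> commutant ci (commutant ci M) = M"

definition separating_vector :: "('h \<Rightarrow> 'h::real_vector) set \<Rightarrow> 'h \<Rightarrow> bool" where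
  "separating_vector M \<Omega> \<longleftrightarrow> (\<forall>x\<in>M. x \<Omega> = 0 \<longrightarrow> x = fzero)"

definition compact_map_on :: "('h::real_normed_vector \<Rightarrow> 'h) set \<Rightarrow> (('h \<Rightarrow> 'h) \<Rightarrow> 'k::metric_space) \<Rightarrow> bool" where
  "compact_map_on M f \<longleftrightarrow> compact (closure (f ` {x\<in>M. onorm x \<le> 1}))"

definition seminorm_on :: "('h \<Rightarrow> 'h) \<Rightarrow> ('h::real_vector \<Rightarrow> 'h) set \<Rightarrow> ('h \<Rightarrow> 'h) set
    \<Rightarrow> (('h \<Rightarrow> 'h) \<times> ('h \<Rightarrow> 'h) \<Rightarrow> real) \<Rightarrow> bool" where
  "seminorm_on ci M N L \<longleftrightarrow>
     (\<forall>x\<in>M. \<forall>y\<in>N. 0 \<le> L (x, y))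
   \<and> (\<forall>x\<in>M. \<forall>y\<in>N. \<forall>c. L (cscale ci c x, cscale ci c y) = cmod c * L (x, y))
   \<and> (\<forall>x\<in>M. \<forall>y\<in>N. \<forall>x'\<in>M. \<forall>y'\<in>N. L (fadd x x', fadd y y') \<le> L (x, y) + L (x', y'))"

definition Lset :: "('h \<Rightarrow> 'h) \<Rightarrow> ('h::real_vector \<Rightarrow> 'h) set \<Rightarrow> (('h \<Rightarrow> 'h) \<Rightarrow> real)
    \<Rightarrow> ('h \<Rightarrow> 'h) set \<Rightarrow> (('h \<Rightarrow> 'h) \<Rightarrow> real) \<Rightarrow> (('h \<Rightarrow> 'h) \<times> ('h \<Rightarrow> 'h) \<Rightarrow> real) set" where
  "Lset ci M LM N LN = {L. seminorm_on ci M N L \<and> (\<forall>x\<in>M. L (x, fzero) = LM x)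
       \<and> (\<forall>y\<in>N. L (fzero, y) = LN y)}"

text \<open>2x2 matrices over operators, indexed by bool (False = first row/column),
  acting on H \<oplus> H.\<close>
type_synonym 'h mat2 = "bool \<Rightarrow> bool \<Rightarrow> ('h \<Rightarrow> 'h)"

definition mat_op :: "'h mat2 \<Rightarrow> 'h \<times> 'h \<Rightarrow> 'h::real_vector \<times> 'h" where
  "mat_op a = (\<lambda>(u1, u2). (a False False u1 + a False True u2, a True False u1 + a True True u2))"

text \<open>Positivity of an operator on a (complex) Hilbert space. For complex-linear operators,
  real self-adjointness coincides with complex self-adjointness, and then
  <Au,u>_C = inner (A u) u.\<close>
definition positive_op :: "('k::real_inner \<Rightarrow> 'k) \<Rightarrow> bool" where
  "positive_op A \<longleftrightarrow> (\<forall>u v. inner (A u) v = inner u (A v)) \<and> (\<forall>u. 0 \<le> inner (A u) u)"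

definition Xset :: "('h::real_inner \<Rightarrow> 'h) set \<Rightarrow> 'h mat2 set" where
  "Xset M = {a. (\<forall>i j. a i j \<in> M) \<and> positive_op (mat_op a) \<and> onorm (mat_op a) \<le> 1}"

definition Lmat :: "(('h \<Rightarrow> 'h) \<times> ('h \<Rightarrow> 'h) \<Rightarrow> real) \<Rightarrow> 'h mat2 \<Rightarrow> 'h mat2 \<Rightarrow> real" where
  "Lmat L a b = Max ((\<lambda>(i, j). L (a i j, b i j)) ` UNIV)"

definition mneg :: "'h::real_vector mat2 \<Rightarrow> 'h mat2" where
  "mneg b = (\<lambda>i j. fneg (b i j))"

definition distH :: "(('h \<Rightarrow> 'h) \<times> ('h \<Rightarrow> 'h) \<Rightarrow> real) \<Rightarrow> 'h::real_vector mat2 set \<Rightarrow> 'h mat2 set \<Rightarrow> ereal" where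
  "distH L XM XN = max (SUP x\<in>XM. INF y\<in>XN. ereal (Lmat L x (mneg y)))
                       (SUP y\<in>XN. INF x\<in>XM. ereal (Lmat L x (mneg y)))"

definition dist_qGH :: "('h \<Rightarrow> 'h) \<Rightarrow> ('h::real_inner \<Rightarrow> 'h) set \<Rightarrow> (('h \<Rightarrow> 'h) \<Rightarrow> real)
    \<Rightarrow> ('h \<Rightarrow> 'h) set \<Rightarrow> (('h \<Rightarrow> 'h) \<Rightarrow> real) \<Rightarrow> ereal" where
  "dist_qGH ci M LM N LN = (INF L\<in>Lset ci M LM N LN. distH L (Xset M) (Xset N))"

end

theory Submission
  imports Defs
begin

text \<open>Couple the two Lip-norms by J(x,y) = \<parallel>Tx\<Omega> + Sy\<Omega>\<parallel> and match every x \<in> X_M with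
  itself in X_N.  Then each entry of the 2x2 matrix contributes
  J(x_ij, -x_ij) = \<parallel>(T - S) x_ij \<Omega>\<parallel>, and the entries of a positive contraction are
  contractions of M; rescaling a nonzero contraction to norm 1 only increases this quantity.
  Separability, injectivity, compactness and the separating vector only serve to make L_1, L_2
  dual-Lip-norms; the estimate does not use them.\<close>

lemma complex_structure_inner_self:
  assumes "complex_structure ci" shows "inner (ci u) u = 0"
proof -
  have "inner (ci u) u = inner (ci (ci u)) (ci u)"
    using assms unfolding complex_structure_def by metis
  also have "\<dots> = - inner u (ci u)" using assms unfolding complex_structure_def by simp
  finally show ?thesis by (simp add: inner_commute)
qed

lemma norm_complex_structure_combination:
  assumes "complex_structure ci"
  shows "norm (a *\<^sub>R u + b *\<^sub>R ci u) = sqrt (a\<^sup>2 + b\<^sup>2) * norm u"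
proof -
  have orth: "inner u (ci u) = 0"
    using complex_structure_inner_self[OF assms] by (simp add: inner_commute)
  have isom: "inner (ci u) (ci u) = inner u u" using assms unfolding complex_structure_def by simp
  have "(norm (a *\<^sub>R u + b *\<^sub>R ci u))\<^sup>2 = inner (a *\<^sub>R u + b *\<^sub>R ci u) (a *\<^sub>R u + b *\<^sub>R ci u)"
    by (simp add: power2_norm_eq_inner)
  also have "\<dots> = a\<^sup>2 * inner u u + b\<^sup>2 * inner (ci u) (ci u) + 2 * a * b * inner u (ci u)"
    by (simp add: inner_add_left inner_add_right inner_commute power2_eq_square algebra_simps)
  also have "\<dots> = (sqrt (a\<^sup>2 + b\<^sup>2) * norm u)\<^sup>2"
    using orth isom by (simp add: power2_norm_eq_inner power_mult_distrib algebra_simps)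
  finally show ?thesis by (simp add: power2_eq_iff_nonneg)
qed

lemma bop_complex_combination:
  assumes "bop ci T"
  shows "T (a *\<^sub>R u + b *\<^sub>R ci u) = a *\<^sub>R T u + b *\<^sub>R ci (T u)"
proof -
  interpret bounded_linear T using assms unfolding bop_def by simp
  show ?thesis using assms unfolding bop_def by (simp add: add scaleR)
qed

lemma von_neumann_algebra_scaleR:
  assumes vn: "von_neumann_algebra ci M" and cs: "complex_structure ci" and x: "x \<in> M"
  shows "(\<lambda>v. c *\<^sub>R x v) \<in> M"
proof -
  have bicomm: "commutant ci (commutant ci M) = M" using vn unfolding von_neumann_algebra_def by blast
  have bx: "bop ci x" using vn x unfolding von_neumann_algebra_def by blast
  have "bounded_linear (\<lambda>v. c *\<^sub>R x v)"
    using bx bounded_linear_compose[OF bounded_linear_scaleR_right] by (auto simp: bop_def o_def)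
  moreover have "c *\<^sub>R x (ci v) = ci (c *\<^sub>R x v)" for v
    using bx cs by (simp add: bop_def complex_structure_def linear_scale)
  moreover have "(\<lambda>v. c *\<^sub>R x v) \<circ> y = y \<circ> (\<lambda>v. c *\<^sub>R x v)" if y: "y \<in> commutant ci M" for y
  proof -
    have "linear y" using y unfolding commutant_def bop_def by (auto dest: bounded_linear.linear)
    moreover have "x (y v) = y (x v)" for v
      using x y bicomm unfolding commutant_def by (metis (mono_tags, lifting) comp_apply mem_Collect_eq)
    ultimately show ?thesis by (auto simp: linear_scale)
  qed
  ultimately have "(\<lambda>v. c *\<^sub>R x v) \<in> commutant ci (commutant ci M)"
    unfolding commutant_def bop_def by simp
  with bicomm show ?thesis by simp
qed

lemma von_neumann_algebra_bounded_linear: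
  assumes "von_neumann_algebra ci M" and "x \<in> M"
  shows "bounded_linear x"
  using assms unfolding von_neumann_algebra_def bop_def by blast

lemma bounded_linear_mat_op:
  fixes a :: "'h::real_normed_vector mat2"
  assumes bl: "\<And>i j. bounded_linear (a i j)"
  shows "bounded_linear (mat_op a)"
proof -
  have "mat_op a = (\<lambda>p. (a False False (fst p) + a False True (snd p),
                         a True False (fst p) + a True True (snd p)))"
    by (auto simp: mat_op_def fun_eq_iff split: prod.split)
  moreover have "\<And>i j. bounded_linear (\<lambda>p. a i j (fst p))" "\<And>i j. bounded_linear (\<lambda>p. a i j (snd p))"
    using bounded_linear_compose[OF bl bounded_linear_fst]
      bounded_linear_compose[OF bl bounded_linear_snd] by auto
  ultimately show ?thesis by (simp only:) (intro bounded_linear_Pair bounded_linear_add)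
qed

lemma Xset_entry_onorm_le_1:
  fixes M :: "('h::real_inner \<Rightarrow> 'h) set"
  assumes vn: "von_neumann_algebra ci M" and x: "x \<in> Xset M"
  shows "onorm (x i j) \<le> 1"
proof (rule onorm_bound)
  fix u
  have "\<And>i j. x i j \<in> M" using x unfolding Xset_def by simp
  hence bl: "\<And>i j. bounded_linear (x i j)" by (rule von_neumann_algebra_bounded_linear[OF vn])
  hence zero: "\<And>i j. x i j 0 = 0" by (simp add: linear_simps(3) bounded_linear.linear)
  define p :: "'h \<times> 'h" where "p = (if j then (0, u) else (u, 0))"
  have "mat_op x p = (x False j u, x True j u)"
    unfolding p_def mat_op_def using zero by auto
  hence "norm (x i j u) \<le> norm (mat_op x p)"
    by (cases i) (simp_all add: norm_fst_le norm_snd_le)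
  also have "\<dots> \<le> onorm (mat_op x) * norm p" by (rule onorm[OF bounded_linear_mat_op[OF bl]])
  also have "\<dots> = onorm (mat_op x) * norm u" by (simp add: p_def norm_Pair)
  also have "\<dots> \<le> 1 * norm u" using x unfolding Xset_def by (intro mult_right_mono) auto
  finally show "norm (x i j u) \<le> 1 * norm u" .
qed simp

lemma le_Sup_unit_sphere:
  fixes f :: "'h::real_normed_vector \<Rightarrow> 'k::real_normed_vector"
  assumes f: "linear f" and scale: "\<And>x c. x \<in> M \<Longrightarrow> (\<lambda>v. c *\<^sub>R x v) \<in> M"
    and bl: "bounded_linear a" and a: "a \<in> M" "onorm a \<le> 1"
  shows "ereal (norm (f (a \<Omega>))) \<le> Sup ({0} \<union> {ereal (norm (f (x \<Omega>))) | x. x \<in> M \<and> onorm x = 1})"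
    (is "_ \<le> Sup ?A")
proof (cases "onorm a = 0")
  case True
  hence "a \<Omega> = 0" using onorm_eq_0[OF bl] by simp
  hence "ereal (norm (f (a \<Omega>))) = 0" using f by (simp add: linear_0)
  also have "(0::ereal) \<le> Sup ?A" by (rule Sup_upper) simp
  finally show ?thesis .
next
  case False
  define c where "c = onorm a"
  have c: "0 < c" "c \<le> 1" using False onorm_pos_le[OF bl] a unfolding c_def by auto
  define a' where "a' = (\<lambda>v. (1 / c) *\<^sub>R a v)"
  have "onorm a' = 1" using onorm_scaleR[OF bl, of "1 / c"] c unfolding a'_def c_def by simp
  moreover have "a' \<in> M" unfolding a'_def by (rule scale[OF a(1)])
  ultimately have "ereal (norm (f (a' \<Omega>))) \<le> Sup ?A" by (intro Sup_upper) blast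
  moreover have "norm (f (a \<Omega>)) = c * norm (f (a' \<Omega>))"
    using c f by (simp add: a'_def linear_scale)
  hence "ereal (norm (f (a \<Omega>))) \<le> ereal (norm (f (a' \<Omega>)))"
    using c by (simp add: mult_left_le_one_le)
  ultimately show ?thesis by (rule order_trans[rotated])
qed

lemma Lmat_attained:
  obtains i j where "Lmat L a b = L (a i j, b i j)"
proof -
  have "Lmat L a b \<in> (\<lambda>(i, j). L (a i j, b i j)) ` UNIV"
    unfolding Lmat_def by (rule Max_in) simp_all
  with that show ?thesis by auto
qed

lemma distH_self_le:
  assumes "\<And>x. x \<in> X \<Longrightarrow> ereal (Lmat L x (mneg x)) \<le> B"
  shows "distH L X X \<le> B"
  unfolding distH_def using assms by (intro max.boundedI SUP_least INF_lower2) auto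

lemma norm_sum_in_Lset:
  assumes cs: "complex_structure ci" and "bop ci T" "bop ci S"
  shows "(\<lambda>(x, y). norm (T (x \<Omega>) + S (y \<Omega>)))
           \<in> Lset ci M (\<lambda>x. norm (T (x \<Omega>))) N (\<lambda>y. norm (S (y \<Omega>)))"
proof -
  have lin: "linear T" "linear S" "linear ci"
    using assms by (auto simp: bop_def complex_structure_def bounded_linear.linear)
  have "T (cscale ci c x \<Omega>) + S (cscale ci c y \<Omega>)
      = Re c *\<^sub>R (T (x \<Omega>) + S (y \<Omega>)) + Im c *\<^sub>R ci (T (x \<Omega>) + S (y \<Omega>))" for c x y
    unfolding cscale_def using bop_complex_combination[OF assms(2)]
      bop_complex_combination[OF assms(3)] lin by (simp add: linear_add algebra_simps)
  hence "norm (T (cscale ci c x \<Omega>) + S (cscale ci c y \<Omega>)) = cmod c * norm (T (x \<Omega>) + S (y \<Omega>))"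
    for c x y using norm_complex_structure_combination[OF cs] by (simp add: norm_complex_def)
  moreover have "T (fadd x x' \<Omega>) + S (fadd y y' \<Omega>) = (T (x \<Omega>) + S (y \<Omega>)) + (T (x' \<Omega>) + S (y' \<Omega>))"
    for x x' y y' unfolding fadd_def using lin by (simp add: linear_add algebra_simps)
  ultimately show ?thesis
    using lin by (auto simp: Lset_def seminorm_on_def fzero_def linear_0 norm_triangle_ineq)
qed

lemma Lmat_norm_sum_neg_le_Sup_unit_sphere:
  assumes cs: "complex_structure ci" and vn: "von_neumann_algebra ci M"
    and bT: "bop ci T" and bS: "bop ci S" and x: "x \<in> Xset M"
  shows "ereal (Lmat (\<lambda>(x, y). norm (T (x \<Omega>) + S (y \<Omega>))) x (mneg x))
      \<le> Sup ({0} \<union> {ereal (norm (T (x \<Omega>) - S (x \<Omega>))) | x. x \<in> M \<and> onorm x = 1})"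
proof -
  have lin: "linear (\<lambda>v. T v - S v)" "linear S"
    using bT bS by (auto simp: bop_def bounded_linear.linear intro: linear_compose_sub)
  obtain i j where "Lmat (\<lambda>(x, y). norm (T (x \<Omega>) + S (y \<Omega>))) x (mneg x)
      = (\<lambda>(x, y). norm (T (x \<Omega>) + S (y \<Omega>))) (x i j, mneg x i j)"
    by (rule Lmat_attained)
  also have "\<dots> = norm (T (x i j \<Omega>) - S (x i j \<Omega>))"
    using lin(2) by (simp add: mneg_def fneg_def linear_neg)
  finally have "ereal (Lmat (\<lambda>(x, y). norm (T (x \<Omega>) + S (y \<Omega>))) x (mneg x))
      = ereal (norm (T (x i j \<Omega>) - S (x i j \<Omega>)))" by simp
  also have "\<dots> \<le> Sup ({0} \<union> {ereal (norm (T (x \<Omega>) - S (x \<Omega>))) | x. x \<in> M \<and> onorm x = 1})"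
  proof (rule le_Sup_unit_sphere[OF lin(1) von_neumann_algebra_scaleR[OF vn cs]])
    show "x i j \<in> M" using x unfolding Xset_def by simp
    then show "bounded_linear (x i j)" by (rule von_neumann_algebra_bounded_linear[OF vn])
  qed (use Xset_entry_onorm_le_1[OF vn x] in auto)
  finally show ?thesis .
qed

theorem mainTheorem13:
  fixes ci :: "'h::{real_inner, complete_space} \<Rightarrow> 'h"
    and M :: "('h \<Rightarrow> 'h) set" and \<Omega> :: 'h and T S :: "'h \<Rightarrow> 'h"
  assumes "complex_structure ci"
    and "separable_space_set (UNIV :: 'h set)"
    and "von_neumann_algebra ci M"
    and "separating_vector M \<Omega>"
    and "bop ci T" and "bop ci S" and "inj T" and "inj S"
    and "compact_map_on M (\<lambda>x. T (x \<Omega>))" and "compact_map_on M (\<lambda>x. S (x \<Omega>))"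
  shows "(\<lambda>(x, y). norm (T (x \<Omega>) + S (y \<Omega>)))
           \<in> Lset ci M (\<lambda>x. norm (T (x \<Omega>))) M (\<lambda>y. norm (S (y \<Omega>)))
       \<and> dist_qGH ci M (\<lambda>x. norm (T (x \<Omega>))) M (\<lambda>y. norm (S (y \<Omega>)))
           \<le> Sup ({0} \<union> {ereal (norm (T (x \<Omega>) - S (x \<Omega>))) | x. x \<in> M \<and> onorm x = 1})"
proof -
  note cs = assms(1) and vn = assms(3) and bT = assms(5) and bS = assms(6)
  define J where "J = (\<lambda>(x, y). norm (T (x \<Omega>) + S (y \<Omega>)))"
  have J: "J \<in> Lset ci M (\<lambda>x. norm (T (x \<Omega>))) M (\<lambda>y. norm (S (y \<Omega>)))"
    unfolding J_def by (rule norm_sum_in_Lset[OF cs bT bS])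
  have "dist_qGH ci M (\<lambda>x. norm (T (x \<Omega>))) M (\<lambda>y. norm (S (y \<Omega>)))
      \<le> distH J (Xset M) (Xset M)"
    unfolding dist_qGH_def by (rule INF_lower[OF J])
  also have "\<dots> \<le> Sup ({0} \<union> {ereal (norm (T (x \<Omega>) - S (x \<Omega>))) | x. x \<in> M \<and> onorm x = 1})"
    unfolding J_def
    by (rule distH_self_le) (rule Lmat_norm_sum_neg_le_Sup_unit_sphere[OF cs vn bT bS])
  finally show ?thesis using J unfolding J_def by simp
qed

end
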